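(* Let $p$ be an odd prime, $k\in\{-1,1\}$, $n\ge 1$ an integer, and let $L_n^k(f,p)$ be a Legendre graph of order $n$ (with bijection $f$). Put $q=\lfloor n/p\rfloor$, $r=n-qp$ and $F=\{1,2,\dots,r\}$ (empty if $r=0$). For a vertex $v$ with $1\le f(v)\le qp$ let $$\omega^k(v)=\{\xi\in\{0,1,\dots,p-1\}:\ \xi\equiv f(v)+c \pmod p \text{ for some } c\in F,\ (\xi/p)=k\},$$ and for a vertex $v$ with $qp+1\le f(v)\le n$ let $\varepsilon(v)=f(v)-qp\in F$ and $$\pi^k(v)=\{\xi\in\{0,1,\dots,p-1\}:\ \xi\equiv f(v)+c \pmod p \text{ for some } c\in F\setminus\{\varepsilon(v)\},\ (\xi/p)=k\}.$$ Then for every vertex $v$: (i) if $1\le f(v)\le qp$ and $(2f(v)/p)=k$, then $\deg(v)=q\frac{p-1}{2}-1+|\omega^k(v)|$; (ii) if $1\le f(v)\le qp$ and either $(2f(v)/p)=-k$ or $f(v)\equiv 0\pmod p$, then $\deg(v)=q\frac{p-1}{2}+|\omega^k(v)|$; (iii) if $qp+1\le f(v)\le n$, then $\deg(v)=q\frac{p-1}{2}+|\pi^k(v)|$.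
   Context: For an odd prime $p$ and an integer $a$ not divisible by $p$, $(a/p)$ denotes the Legendre symbol: $1$ if $a$ is a quadratic residue mod $p$, $-1$ otherwise (it is not assigned the value $\pm1$ when $p\mid a$). For $k\in\{-1,1\}$, a Legendre graph $L_n^k(f,p)$ of order $n$ is a simple graph on an $n$-element vertex set $V$ together with a bijection $f:V\to\{1,2,\dots,n\}$, whose edges are exactly the pairs $\{a,b\}$ of distinct vertices with $p\nmid f(a)+f(b)$ and $((f(a)+f(b))/p)=k$. *)

theory Defs
  imports "HOL-Number_Theory.Number_Theory"
begin

definition legendre_graph ::
  "'a set \<Rightarrow> 'a set set \<Rightarrow> ('a \<Rightarrow> nat) \<Rightarrow> nat \<Rightarrow> int \<Rightarrow> nat \<Rightarrow> bool" where
  "legendre_graph V E f n k p \<longleftrightarrow>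
     finite V \<and> bij_betw f V {1..n} \<and>
     E = {{a, b} | a b. a \<in> V \<and> b \<in> V \<and> a \<noteq> b \<and> \<not> p dvd (f a + f b) \<and>
                        Legendre (int (f a + f b)) (int p) = k}"

definition degree :: "'a set \<Rightarrow> 'a set set \<Rightarrow> 'a \<Rightarrow> nat" where
  "degree V E v = card {u \<in> V. {u, v} \<in> E}"

end

theory Submission
  imports Defs
begin

text \<open>
  As k \<noteq> 0, the condition p \<not>| f u + f v in the edge relation is implied by the Legendre
  condition, so deg v counts the labels m \<in> {1..n}, m \<noteq> f v, with ((m + f v)/p) = k.
  The labels 1, ..., qp form q complete residue systems mod p, and each contributes (p - 1)/2
  such m, because squaring maps {1..(p-1)/2} bijectively onto the nonzero quadratic residues;
  excluding m = f v costs exactly one when f v \<le> qp and ((2 f v)/p) = k. The remaining labels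
  qp + c, c \<in> F - {\<epsilon>(v)}, reduce injectively mod p to the residues f v + c, which gives
  |\<pi>^k(v)|. When f v \<le> qp the truncated subtraction makes \<epsilon>(v) = 0 \<notin> F, so then
  \<pi>^k(v) = \<omega>^k(v) and the three cases follow uniformly.
\<close>

lemma Legendre_cong:
  assumes "[a = b] (mod m)"
  shows "Legendre a m = Legendre b m"
proof -
  have "[a = 0] (mod m) \<longleftrightarrow> [b = 0] (mod m)" and "QuadRes m a \<longleftrightarrow> QuadRes m b"
    using assms cong_sym cong_trans unfolding QuadRes_def by blast+
  then show ?thesis
    unfolding Legendre_def by simp
qed

lemma Legendre_mod:
  "Legendre (int (x mod p)) (int p) = Legendre (int x) (int p)"
  by (rule Legendre_cong) (simp add: cong_def of_nat_mod)

lemma cong_imp_eq_in_interval: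
  fixes x y t p :: nat
  assumes "x \<in> {t..<t + p}" "y \<in> {t..<t + p}" "[x = y] (mod p)"
  shows "x = y"
proof -
  have "[x - t = y - t] (mod p)"
    using assms by (intro cong_diff_nat) auto
  then have "x - t = y - t"
    by (rule cong_less_modulus_unique_nat) (use assms in auto)
  then show ?thesis
    using assms by auto
qed

lemma bij_betw_add_mod_interval:
  fixes p :: nat
  assumes "p > 0"
  shows "bij_betw (\<lambda>m. (m + a) mod p) {t..<t + p} {0..<p}"
proof -
  have inj: "inj_on (\<lambda>m. (m + a) mod p) {t..<t + p}"
  proof (rule inj_onI)
    fix x y assume "x \<in> {t..<t + p}" "y \<in> {t..<t + p}" "(x + a) mod p = (y + a) mod p"
    then show "x = y"
      using cong_add_rcancel_nat cong_imp_eq_in_interval unfolding cong_def by blast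
  qed
  moreover have "(\<lambda>m. (m + a) mod p) ` {t..<t + p} \<subseteq> {0..<p}"
    using assms by auto
  moreover have "card ((\<lambda>m. (m + a) mod p) ` {t..<t + p}) = card {0..<p}"
    using card_image[OF inj] by simp
  ultimately show ?thesis
    unfolding bij_betw_def by (simp add: card_subset_eq)
qed

lemma card_interval_add_mod:
  fixes p :: nat
  assumes "p > 0"
  shows "card {m \<in> {t..<t + q * p}. P ((m + a) mod p)} = q * card {x \<in> {0..<p}. P x}"
proof (induction q)
  case (Suc q)
  let ?S = "\<lambda>A. {m \<in> A. P ((m + a) mod p)}"
  have "?S {t..<t + Suc q * p} = ?S {t..<t + q * p} \<union> ?S {t + q * p..<t + q * p + p}"
    by auto
  moreover have "card (?S {t..<t + q * p} \<union> ?S {t + q * p..<t + q * p + p})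
      = card (?S {t..<t + q * p}) + card (?S {t + q * p..<t + q * p + p})"
    by (rule card_Un_disjoint) auto
  moreover have "card (?S {t + q * p..<t + q * p + p}) = card {x \<in> {0..<p}. P x}"
    by (rule bij_betw_same_card[OF bij_betw_Collect[OF bij_betw_add_mod_interval[OF assms]]]) simp
  ultimately show ?case
    using Suc.IH by simp
qed simp

lemma card_subset_interval_add_mod:
  fixes p :: nat
  assumes "p > 0" and "G \<subseteq> {t..<t + p}"
  shows "card {c \<in> G. P ((c + a) mod p)}
       = card {\<xi> \<in> {0..<p}. (\<exists>c\<in>G. [\<xi> = a + c] (mod p)) \<and> P \<xi>}"
proof -
  have "(\<lambda>c. (c + a) mod p) ` G = {\<xi> \<in> {0..<p}. \<exists>c\<in>G. [\<xi> = a + c] (mod p)}"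
    using assms(1) by (auto simp: cong_def add.commute)
  then have "bij_betw (\<lambda>c. (c + a) mod p) G {\<xi> \<in> {0..<p}. \<exists>c\<in>G. [\<xi> = a + c] (mod p)}"
    using bij_betw_subset[OF bij_betw_add_mod_interval[OF assms(1)] assms(2)] by blast
  then have "bij_betw (\<lambda>c. (c + a) mod p) {c \<in> G. P ((c + a) mod p)}
      {\<xi> \<in> {\<xi> \<in> {0..<p}. \<exists>c\<in>G. [\<xi> = a + c] (mod p)}. P \<xi>}"
    by (rule bij_betw_Collect) simp
  then show ?thesis
    by (simp add: bij_betw_same_card conj_assoc)
qed

lemma card_QuadRes_nonzero:
  fixes p :: int
  assumes "prime p" and "odd p"
  shows "card {x \<in> {1..p - 1}. QuadRes p x} = nat ((p - 1) div 2)"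
proof -
  define h where "h = (p - 1) div 2"
  define sq where "sq y = y\<^sup>2 mod p" for y
  have p_eq: "p = 2 * h + 1"
    using assms(2) unfolding h_def by presburger
  have "p > 0"
    using assms(1) prime_gt_0_int by blast
  have sq_minus: "sq (p - y) = sq y" for y
  proof -
    have "(p - y)\<^sup>2 = y\<^sup>2 + p * (p - 2 * y)"
      by (simp add: power2_eq_square algebra_simps)
    then show ?thesis
      unfolding sq_def by simp
  qed
  have "inj_on sq {1..h}"
  proof (rule inj_onI)
    fix y z assume y: "y \<in> {1..h}" and z: "z \<in> {1..h}" and "sq y = sq z"
    then have "p dvd (y - z) * (y + z)"
      unfolding sq_def by (simp add: mod_eq_dvd_iff power2_eq_square algebra_simps)
    moreover have "\<not> p dvd y + z"
      using y z p_eq by (auto simp: zdvd_not_zless)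
    ultimately have "[y = z] (mod p)"
      using assms(1) by (auto simp: cong_iff_dvd_diff dest: prime_dvd_multD)
    then show "y = z"
      using y z p_eq cong_less_imp_eq_int[of y p z] by auto
  qed
  moreover have "sq ` {1..h} = {x \<in> {1..p - 1}. QuadRes p x}"
  proof (intro equalityI subsetI)
    fix x assume "x \<in> sq ` {1..h}"
    then obtain y where y: "y \<in> {1..h}" and x: "x = sq y"
      by blast
    have "\<not> p dvd y"
      using y p_eq by (auto simp: zdvd_not_zless)
    then have "\<not> p dvd y\<^sup>2"
      using assms(1) prime_dvd_power by blast
    then have "x \<noteq> 0"
      unfolding x sq_def by (simp add: dvd_eq_mod_eq_0)
    moreover have "0 \<le> x" "x < p" "QuadRes p x"
      using \<open>p > 0\<close> unfolding x sq_def QuadRes_def by (auto simp: cong_def)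
    ultimately show "x \<in> {x \<in> {1..p - 1}. QuadRes p x}"
      by simp
  next
    fix x assume x: "x \<in> {x \<in> {1..p - 1}. QuadRes p x}"
    then obtain y where "[y\<^sup>2 = x] (mod p)"
      unfolding QuadRes_def by blast
    then have sq_y: "sq (y mod p) = x"
      using x unfolding sq_def cong_def by (simp add: power_mod)
    moreover have "y mod p \<noteq> 0"
      using sq_y x unfolding sq_def by auto
    moreover have "0 \<le> y mod p" "y mod p < p"
      using \<open>p > 0\<close> by auto
    ultimately show "x \<in> sq ` {1..h}"
      using sq_minus[of "y mod p"] p_eq
      by (cases "y mod p \<le> h") (force intro: image_eqI[of _ _ "p - y mod p"])+
  qed
  ultimately show ?thesis
    using card_image unfolding h_def by fastforce
qed

lemma Legendre_less:
  assumes "x < p"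
  shows "Legendre (int x) (int p) = (if x = 0 then 0 else if QuadRes (int p) (int x) then 1 else -1)"
  using assms unfolding Legendre_def by (simp add: cong_def)

lemma card_Legendre_eq:
  fixes p :: nat
  assumes "prime p" and "odd p" and "k \<in> {-1, 1}"
  shows "card {x \<in> {0..<p}. Legendre (int x) (int p) = k} = (p - 1) div 2"
proof -
  let ?R = "{x \<in> {1..<p}. QuadRes (int p) (int x)}"
  let ?N = "{x \<in> {1..<p}. \<not> QuadRes (int p) (int x)}"
  have "int ` ?R = {x \<in> {1..int p - 1}. QuadRes (int p) x}"
  proof (intro equalityI subsetI)
    fix x assume "x \<in> {x \<in> {1..int p - 1}. QuadRes (int p) x}"
    then have "x = int (nat x)" and "nat x \<in> ?R"
      by auto
    then show "x \<in> int ` ?R"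
      by blast
  qed auto
  then have card_R: "card ?R = (p - 1) div 2"
    using card_QuadRes_nonzero[of "int p"] assms(1,2) card_image[of int ?R]
    by (simp add: nat_div_distrib of_nat_diff)
  have "card ?R + card ?N = card (?R \<union> ?N)"
    by (rule card_Un_disjoint[symmetric]) auto
  also have "?R \<union> ?N = {1..<p}"
    by auto
  finally have "card ?R + card ?N = p - 1"
    by simp
  with card_R have card_N: "card ?N = (p - 1) div 2"
    using assms(2) by presburger
  show ?thesis
  proof (cases "k = 1")
    case True
    then have "{x \<in> {0..<p}. Legendre (int x) (int p) = k} = ?R"
      by (auto simp: Legendre_less split: if_splits)
    then show ?thesis
      using card_R by simp
  next
    case False
    then have "{x \<in> {0..<p}. Legendre (int x) (int p) = k} = ?N"
      using assms(3) by (auto simp: Legendre_less split: if_splits)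
    then show ?thesis
      using card_N by simp
  qed
qed

lemma of_nat_card_Diff_singleton:
  assumes "finite A"
  shows "int (card (A - {a})) = int (card A) - (if a \<in> A then 1 else 0)"
proof (cases "a \<in> A")
  case True
  then have "card A > 0"
    using assms card_gt_0_iff by blast
  then show ?thesis
    using True assms by (simp add: of_nat_diff Suc_le_eq)
qed simp

lemma degree_legendre_graph:
  assumes "legendre_graph V E f n k p" and "v \<in> V" and "k \<noteq> 0"
  shows "degree V E v = card {m \<in> {1..n}. m \<noteq> f v \<and> Legendre (int (m + f v)) (int p) = k}"
proof -
  have bij: "bij_betw f V {1..n}"
    and E: "E = {{a, b} | a b. a \<in> V \<and> b \<in> V \<and> a \<noteq> b \<and> \<not> p dvd (f a + f b) \<and>
                              Legendre (int (f a + f b)) (int p) = k}"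
    using assms(1) unfolding legendre_graph_def by auto
  have not_dvd: "\<not> p dvd x" if "Legendre (int x) (int p) = k" for x
    using that assms(3) unfolding Legendre_def by (auto simp: cong_0_iff)
  have "{u, v} \<in> E \<longleftrightarrow> f u \<noteq> f v \<and> Legendre (int (f u + f v)) (int p) = k" if "u \<in> V" for u
  proof
    assume "{u, v} \<in> E"
    then show "f u \<noteq> f v \<and> Legendre (int (f u + f v)) (int p) = k"
      using that assms(2) bij unfolding E bij_betw_def inj_on_def
      by (auto simp: doubleton_eq_iff add.commute)
  next
    assume adj: "f u \<noteq> f v \<and> Legendre (int (f u + f v)) (int p) = k"
    then have "u \<noteq> v" and "\<not> p dvd (f u + f v)"
      using not_dvd by auto
    then show "{u, v} \<in> E"
      using that assms(2) adj unfolding E by blast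
  qed
  then have "bij_betw f {u \<in> V. {u, v} \<in> E}
      {m \<in> {1..n}. m \<noteq> f v \<and> Legendre (int (m + f v)) (int p) = k}"
    using bij by (intro bij_betw_Collect) auto
  then show ?thesis
    unfolding degree_def by (rule bij_betw_same_card)
qed

lemma card_Legendre_shift_eq:
  fixes p :: nat
  assumes "prime p" and "odd p" and "k \<in> {-1, 1}"
  shows "card {m \<in> {1..q * p}. Legendre (int (m + a)) (int p) = k} = q * ((p - 1) div 2)"
proof -
  have "p > 0"
    using assms(1) prime_gt_0_nat by blast
  have "{1..q * p} = {1..<1 + q * p}"
    by auto
  then have "card {m \<in> {1..q * p}. Legendre (int (m + a)) (int p) = k}
      = card {m \<in> {1..<1 + q * p}. Legendre (int ((m + a) mod p)) (int p) = k}"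
    by (simp only: Legendre_mod)
  also have "\<dots> = q * card {x \<in> {0..<p}. Legendre (int x) (int p) = k}"
    using \<open>p > 0\<close> by (rule card_interval_add_mod)
  finally show ?thesis
    unfolding card_Legendre_eq[OF assms] .
qed

lemma degree_legendre_graph_split:
  fixes p :: nat
  assumes "p > 0" and "legendre_graph V E f n k p" and "v \<in> V" and "k \<noteq> 0"
  defines "q \<equiv> n div p"
  shows "degree V E v
       = card ({m \<in> {1..q * p}. Legendre (int (m + f v)) (int p) = k} - {f v})
       + card {\<xi> \<in> {0..<p}. (\<exists>c\<in>{1..n - q * p} - {f v - q * p}. [\<xi> = f v + c] (mod p))
                            \<and> Legendre (int \<xi>) (int p) = k}"
proof -
  define a where "a = f v"
  define P where "P m \<longleftrightarrow> Legendre (int (m + a)) (int p) = k" for m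
  define C where "C = {1..n - q * p} - {a - q * p}"
  have "q * p \<le> n" "n - q * p < p"
    unfolding q_def using \<open>p > 0\<close> by (auto simp: minus_div_mult_eq_mod)
  have split: "{m \<in> {1..n}. m \<noteq> a \<and> P m}
      = ({m \<in> {1..q * p}. P m} - {a}) \<union> (\<lambda>c. q * p + c) ` {c \<in> C. P (q * p + c)}"
  proof (intro equalityI subsetI)
    fix m assume m: "m \<in> {m \<in> {1..n}. m \<noteq> a \<and> P m}"
    show "m \<in> ({m \<in> {1..q * p}. P m} - {a}) \<union> (\<lambda>c. q * p + c) ` {c \<in> C. P (q * p + c)}"
    proof (cases "m \<le> q * p")
      case False
      then have "m - q * p \<in> {c \<in> C. P (q * p + c)}"
        using m unfolding C_def by auto
      then show ?thesis
        using False by (intro UnI2 image_eqI[of m _ "m - q * p"]) auto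
    qed (use m in auto)
  qed (use \<open>q * p \<le> n\<close> in \<open>auto simp: C_def\<close>)
  have "P (q * p + c) \<longleftrightarrow> Legendre (int ((c + a) mod p)) (int p) = k" for c
  proof -
    have "(q * p + c + a) mod p = (c + a) mod p"
      by (simp add: add.assoc)
    then show ?thesis
      unfolding P_def by (metis Legendre_mod add.assoc)
  qed
  then have "card {c \<in> C. P (q * p + c)} = card {c \<in> C. Legendre (int ((c + a) mod p)) (int p) = k}"
    by simp
  also have "\<dots> = card {\<xi> \<in> {0..<p}. (\<exists>c\<in>C. [\<xi> = a + c] (mod p)) \<and> Legendre (int \<xi>) (int p) = k}"
    using \<open>n - q * p < p\<close> unfolding C_def
    by (intro card_subset_interval_add_mod[OF assms(1), of _ 1]) auto
  finally have tail: "card {c \<in> C. P (q * p + c)} = \<dots>" .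
  have "degree V E v = card {m \<in> {1..n}. m \<noteq> a \<and> P m}"
    unfolding a_def P_def by (rule degree_legendre_graph[OF assms(2-4)])
  also have "\<dots> = card ({m \<in> {1..q * p}. P m} - {a}) + card {c \<in> C. P (q * p + c)}"
    unfolding split by (subst card_Un_disjoint) (auto simp: card_image C_def)
  finally show ?thesis
    unfolding tail unfolding a_def P_def C_def .
qed

lemma degree_legendre_graph_eq:
  fixes p :: nat
  assumes "prime p" and "odd p" and "k \<in> {-1, 1}" and "legendre_graph V E f n k p" and "v \<in> V"
  defines "q \<equiv> n div p"
  shows "int (degree V E v)
       = int (q * ((p - 1) div 2))
       - (if f v \<le> q * p \<and> Legendre (int (2 * f v)) (int p) = k then 1 else 0)
       + int (card {\<xi> \<in> {0..<p}. (\<exists>c\<in>{1..n - q * p} - {f v - q * p}. [\<xi> = f v + c] (mod p))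
                                 \<and> Legendre (int \<xi>) (int p) = k})"
proof -
  let ?H = "{m \<in> {1..q * p}. Legendre (int (m + f v)) (int p) = k}"
  have "k \<noteq> 0"
    using assms(3) by auto
  have "1 \<le> f v"
    using assms(4,5) unfolding legendre_graph_def bij_betw_def by auto
  then have "f v \<in> ?H \<longleftrightarrow> f v \<le> q * p \<and> Legendre (int (2 * f v)) (int p) = k"
    unfolding mult_2 by simp
  moreover have "card ?H = q * ((p - 1) div 2)"
    by (rule card_Legendre_shift_eq[OF assms(1-3)])
  moreover have "finite ?H"
    by simp
  ultimately show ?thesis
    using degree_legendre_graph_split[OF prime_gt_0_nat[OF assms(1)] assms(4,5) \<open>k \<noteq> 0\<close>]
    unfolding q_def
    by (simp add: of_nat_card_Diff_singleton)
qed

theorem lemma3p2: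
  fixes V :: "'a set" and E :: "'a set set" and f :: "'a \<Rightarrow> nat"
    and n p :: nat and k :: int and v :: "'a"
  assumes "prime p" and "odd p" and "k \<in> {-1, 1}" and "n \<ge> 1"
    and "legendre_graph V E f n k p"
    and "v \<in> V"
  defines "q \<equiv> n div p"
  defines "r \<equiv> n - q * p"
  defines "F \<equiv> {1..r}"
  defines "\<omega> \<equiv> {\<xi> \<in> {0..<p}. (\<exists>c\<in>F. [\<xi> = f v + c] (mod p)) \<and> Legendre (int \<xi>) (int p) = k}"
  defines "\<epsilon> \<equiv> f v - q * p"
  defines "\<pi> \<equiv> {\<xi> \<in> {0..<p}. (\<exists>c\<in>F - {\<epsilon>}. [\<xi> = f v + c] (mod p)) \<and> Legendre (int \<xi>) (int p) = k}"
  shows "(1 \<le> f v \<and> f v \<le> q * p \<and> Legendre (int (2 * f v)) (int p) = k \<longrightarrow>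
            int (degree V E v) = int q * ((int p - 1) div 2) - 1 + int (card \<omega>))
       \<and> (1 \<le> f v \<and> f v \<le> q * p \<and> (Legendre (int (2 * f v)) (int p) = - k \<or> [f v = 0] (mod p)) \<longrightarrow>
            int (degree V E v) = int q * ((int p - 1) div 2) + int (card \<omega>))
       \<and> (q * p + 1 \<le> f v \<and> f v \<le> n \<longrightarrow>
            int (degree V E v) = int q * ((int p - 1) div 2) + int (card \<pi>))"
proof -
  have degree: "int (degree V E v) = int q * ((int p - 1) div 2)
      - (if f v \<le> q * p \<and> Legendre (int (2 * f v)) (int p) = k then 1 else 0) + int (card \<pi>)"
    using degree_legendre_graph_eq[OF assms(1-3,5,6)] prime_gt_0_nat[OF assms(1)]
    unfolding \<pi>_def \<epsilon>_def F_def r_def q_def by (simp add: zdiv_int of_nat_diff)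
  have \<pi>_eq_\<omega>: "\<pi> = \<omega>" if "f v \<le> q * p"
  proof -
    have "F - {\<epsilon>} = F"
      using that unfolding \<epsilon>_def F_def by simp
    then show ?thesis
      unfolding \<pi>_def \<omega>_def by simp
  qed
  have "Legendre (int (2 * f v)) (int p) \<noteq> k" if "[f v = 0] (mod p)"
    using that assms(3) unfolding Legendre_def by (auto simp: cong_0_iff)
  moreover have "- k \<noteq> k"
    using assms(3) by auto
  ultimately show ?thesis
    using degree \<pi>_eq_\<omega> by auto
qed

end
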